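(* Let $(l,k,b)$ be a suspension triplet for $(X_A,\sigma_A)$ and $c=l-k$. Then there is a bijective correspondence $\tau\mapsto\gamma_\tau$ between the primitive periodic orbits $\tau\in P_{orb}(S^{l,k}_{A,b},\phi_A)$ of the one-sided suspension and the periodic orbits $\gamma_\tau\in P_{orb}(X_A)$ of $(X_A,\sigma_A)$ such that $\ell(\tau)=\beta_{\gamma_\tau}(c)$, where for $\gamma=\{x,\sigma_A(x),\dots,\sigma_A^{p-1}(x)\}$ with $p$ the least period of $x$, $\beta_\gamma(c)=\sum_{i=0}^{p-1}c(\sigma_A^i(x))$.
   Context: Let $N>1$ and $A$ an irreducible $N\times N$ $\{0,1\}$-matrix which is not a permutation matrix. $X_A$ is the compact space of sequences $(x_n)_{n\in\mathbb N}$, $x_n\in\{1,\dots,N\}$, $A(x_n,x_{n+1})=1$, with $\sigma_A((x_n)_n)=(x_{n+1})_n$. $\mathbb Z_+$, $\mathbb R_+$ are nonnegative integers/reals. A periodic orbit of $(X_A,\sigma_A)$ is a set $\{x,\sigma_A(x),\dots,\sigma_A^{p-1}(x)\}$ where $\sigma_A^p(x)=x$ and $p\ge1$ is minimal; $P_{orb}(X_A)$ is the set of these. $H^A$ is the quotient of $C(X_A,\mathbb Z)$ by $\{u-u\circ\sigma_A\}$, $H^A_+$ the classes of $\mathbb Z_+$-valued continuous functions; $[f]\in H^A_+$ is an order unit if for every $[u]\in H^A$ some $n\in\mathbb N$ has $n[f]-[u]\in H^A_+$. A suspension triplet is $(l,k,b)$ with $l,k\in C(X_A,\mathbb R_+)$,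 $b\in C(X_A,\mathbb R)$ such that $c=l-k$ is integer-valued with $[c]$ an order unit, and $l-b$, $k-b\circ\sigma_A$ take values in $\mathbb Z_+$. $S^{l,k}_{A,b}$ is the quotient of $\{(x,r)\in X_A\times\mathbb R: r\ge b(x)\}$ by the equivalence relation generated by $(x,r)\sim(\sigma_A(x),r-c(x))$ whenever $r\ge l(x)$, with classes $[x,r]$ and flow $\phi_{A,t}([x,r])=[x,r+t]$, $t\in\mathbb R_+$. A (primitive) periodic orbit of this flow is a set $\tau=\{\phi_{A,t}(u):t\in\mathbb R_+\}$ for a point $u$ with $\phi_{A,T}(u)=u$ for some $T>0$; $P_{orb}(S^{l,k}_{A,b},\phi_A)$ is the set of these, and $\ell(\tau)=\min\{t>0:\phi_{A,t}(u)=u\}$ for any $u\in\tau$. *)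

theory Defs
  imports "HOL-Analysis.Analysis"
begin

text \<open>Alphabet {1..N}; the matrix A is a function nat => nat => nat, only entries
 with indices in {1..N} matter. Sequences x :: nat => nat carry the product topology
 (instance from Function_Topology, nat discrete).\<close>

definition zero_one_matrix :: "nat \<Rightarrow> (nat \<Rightarrow> nat \<Rightarrow> nat) \<Rightarrow> bool" where
  "zero_one_matrix N A \<longleftrightarrow> (\<forall>i\<in>{1..N}. \<forall>j\<in>{1..N}. A i j \<in> {0,1})"

text \<open>Irreducible: for all i j some power A^n, n \<ge> 1, has positive (i,j)-entry,
 i.e. there is an admissible path of length n from i to j.\<close>
definition irreducible_matrix :: "nat \<Rightarrow> (nat \<Rightarrow> nat \<Rightarrow> nat) \<Rightarrow> bool" where
  "irreducible_matrix N A \<longleftrightarrow>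
     (\<forall>i\<in>{1..N}. \<forall>j\<in>{1..N}. \<exists>n>0. \<exists>w::nat\<Rightarrow>nat.
        w 0 = i \<and> w n = j \<and> (\<forall>m\<le>n. w m \<in> {1..N}) \<and> (\<forall>m<n. A (w m) (w (Suc m)) = 1))"

definition permutation_matrix :: "nat \<Rightarrow> (nat \<Rightarrow> nat \<Rightarrow> nat) \<Rightarrow> bool" where
  "permutation_matrix N A \<longleftrightarrow>
     (\<forall>i\<in>{1..N}. \<forall>j\<in>{1..N}. A i j \<in> {0,1}) \<and>
     (\<forall>i\<in>{1..N}. \<exists>!j. j \<in> {1..N} \<and> A i j = 1) \<and>
     (\<forall>j\<in>{1..N}. \<exists>!i. i \<in> {1..N} \<and> A i j = 1)"

definition XA :: "nat \<Rightarrow> (nat \<Rightarrow> nat \<Rightarrow> nat) \<Rightarrow> (nat \<Rightarrow> nat) set" where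
  "XA N A = {x. (\<forall>n. x n \<in> {1..N}) \<and> (\<forall>n. A (x n) (x (Suc n)) = 1)}"

definition shift :: "(nat \<Rightarrow> nat) \<Rightarrow> (nat \<Rightarrow> nat)" where
  "shift x = (\<lambda>n. x (Suc n))"

text \<open>Elements of C(X_A,Z) are represented as real-valued functions, continuous on X_A,
 with integer values on X_A.\<close>
definition CZ :: "nat \<Rightarrow> (nat \<Rightarrow> nat \<Rightarrow> nat) \<Rightarrow> ((nat \<Rightarrow> nat) \<Rightarrow> real) set" where
  "CZ N A = {f. continuous_on (XA N A) f \<and> (\<forall>x\<in>XA N A. f x \<in> \<int>)}"

definition coboundary :: "nat \<Rightarrow> (nat \<Rightarrow> nat \<Rightarrow> nat) \<Rightarrow> ((nat \<Rightarrow> nat) \<Rightarrow> real) \<Rightarrow> bool" where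
  "coboundary N A g \<longleftrightarrow> (\<exists>h\<in>CZ N A. \<forall>x\<in>XA N A. g x = h x - h (shift x))"

definition in_Hplus :: "nat \<Rightarrow> (nat \<Rightarrow> nat \<Rightarrow> nat) \<Rightarrow> ((nat \<Rightarrow> nat) \<Rightarrow> real) \<Rightarrow> bool" where
  "in_Hplus N A g \<longleftrightarrow>
     (\<exists>f\<in>CZ N A. (\<forall>x\<in>XA N A. f x \<ge> 0) \<and> coboundary N A (\<lambda>x. g x - f x))"

definition order_unit :: "nat \<Rightarrow> (nat \<Rightarrow> nat \<Rightarrow> nat) \<Rightarrow> ((nat \<Rightarrow> nat) \<Rightarrow> real) \<Rightarrow> bool" where
  "order_unit N A f \<longleftrightarrow> in_Hplus N A f \<and>
     (\<forall>u\<in>CZ N A. \<exists>n::nat. in_Hplus N A (\<lambda>x. real n * f x - u x))"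

definition suspension_triplet ::
  "nat \<Rightarrow> (nat \<Rightarrow> nat \<Rightarrow> nat) \<Rightarrow> ((nat \<Rightarrow> nat) \<Rightarrow> real) \<Rightarrow> ((nat \<Rightarrow> nat) \<Rightarrow> real)
     \<Rightarrow> ((nat \<Rightarrow> nat) \<Rightarrow> real) \<Rightarrow> bool" where
  "suspension_triplet N A l k b \<longleftrightarrow>
     continuous_on (XA N A) l \<and> continuous_on (XA N A) k \<and> continuous_on (XA N A) b \<and>
     (\<forall>x\<in>XA N A. l x \<ge> 0 \<and> k x \<ge> 0) \<and>
     (\<forall>x\<in>XA N A. l x - k x \<in> \<int>) \<and>
     order_unit N A (\<lambda>x. l x - k x) \<and>
     (\<forall>x\<in>XA N A. l x - b x \<in> \<int> \<and> l x - b x \<ge> 0) \<and>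
     (\<forall>x\<in>XA N A. k x - b (shift x) \<in> \<int> \<and> k x - b (shift x) \<ge> 0)"

definition susp_dom :: "nat \<Rightarrow> (nat \<Rightarrow> nat \<Rightarrow> nat) \<Rightarrow> ((nat \<Rightarrow> nat) \<Rightarrow> real)
     \<Rightarrow> ((nat \<Rightarrow> nat) \<times> real) set" where
  "susp_dom N A b = {(x, r). x \<in> XA N A \<and> r \<ge> b x}"

definition susp_step :: "nat \<Rightarrow> (nat \<Rightarrow> nat \<Rightarrow> nat) \<Rightarrow> ((nat \<Rightarrow> nat) \<Rightarrow> real)
     \<Rightarrow> ((nat \<Rightarrow> nat) \<Rightarrow> real) \<Rightarrow> ((nat \<Rightarrow> nat) \<Rightarrow> real)
     \<Rightarrow> (((nat \<Rightarrow> nat) \<times> real) \<times> ((nat \<Rightarrow> nat) \<times> real)) set" where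
  "susp_step N A l k b = {((x, r), (shift x, r - (l x - k x))) | x r.
      (x, r) \<in> susp_dom N A b \<and> r \<ge> l x}"

definition susp_eq :: "nat \<Rightarrow> (nat \<Rightarrow> nat \<Rightarrow> nat) \<Rightarrow> ((nat \<Rightarrow> nat) \<Rightarrow> real)
     \<Rightarrow> ((nat \<Rightarrow> nat) \<Rightarrow> real) \<Rightarrow> ((nat \<Rightarrow> nat) \<Rightarrow> real)
     \<Rightarrow> (((nat \<Rightarrow> nat) \<times> real) \<times> ((nat \<Rightarrow> nat) \<times> real)) set" where
  "susp_eq N A l k b = Id_on (susp_dom N A b) \<union> (susp_step N A l k b \<union> (susp_step N A l k b)\<inverse>)\<^sup>+"

definition susp_space :: "nat \<Rightarrow> (nat \<Rightarrow> nat \<Rightarrow> nat) \<Rightarrow> ((nat \<Rightarrow> nat) \<Rightarrow> real)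
     \<Rightarrow> ((nat \<Rightarrow> nat) \<Rightarrow> real) \<Rightarrow> ((nat \<Rightarrow> nat) \<Rightarrow> real)
     \<Rightarrow> ((nat \<Rightarrow> nat) \<times> real) set set" where
  "susp_space N A l k b = susp_dom N A b // susp_eq N A l k b"

text \<open>Flow: phi_t [x,r] = [x, r+t] (the union of the classes of the shifted representatives,
 which is the class [x,r+t] by well-definedness).\<close>
definition susp_flow :: "nat \<Rightarrow> (nat \<Rightarrow> nat \<Rightarrow> nat) \<Rightarrow> ((nat \<Rightarrow> nat) \<Rightarrow> real)
     \<Rightarrow> ((nat \<Rightarrow> nat) \<Rightarrow> real) \<Rightarrow> ((nat \<Rightarrow> nat) \<Rightarrow> real)
     \<Rightarrow> real \<Rightarrow> ((nat \<Rightarrow> nat) \<times> real) set \<Rightarrow> ((nat \<Rightarrow> nat) \<times> real) set" where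
  "susp_flow N A l k b t C = susp_eq N A l k b `` {(x, r + t) | x r. (x, r) \<in> C}"

definition flow_Porb :: "nat \<Rightarrow> (nat \<Rightarrow> nat \<Rightarrow> nat) \<Rightarrow> ((nat \<Rightarrow> nat) \<Rightarrow> real)
     \<Rightarrow> ((nat \<Rightarrow> nat) \<Rightarrow> real) \<Rightarrow> ((nat \<Rightarrow> nat) \<Rightarrow> real)
     \<Rightarrow> ((nat \<Rightarrow> nat) \<times> real) set set set" where
  "flow_Porb N A l k b = {\<tau>. \<exists>u\<in>susp_space N A l k b.
      (\<exists>T>0. susp_flow N A l k b T u = u) \<and> \<tau> = {susp_flow N A l k b t u | t. t \<ge> 0}}"

definition orbit_length :: "nat \<Rightarrow> (nat \<Rightarrow> nat \<Rightarrow> nat) \<Rightarrow> ((nat \<Rightarrow> nat) \<Rightarrow> real)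
     \<Rightarrow> ((nat \<Rightarrow> nat) \<Rightarrow> real) \<Rightarrow> ((nat \<Rightarrow> nat) \<Rightarrow> real)
     \<Rightarrow> ((nat \<Rightarrow> nat) \<times> real) set set \<Rightarrow> real" where
  "orbit_length N A l k b \<tau> =
     (let u = (SOME u. u \<in> \<tau>) in LEAST t. t > 0 \<and> susp_flow N A l k b t u = u)"

definition least_period :: "(nat \<Rightarrow> nat) \<Rightarrow> nat" where
  "least_period x = (LEAST p. p \<ge> 1 \<and> (shift ^^ p) x = x)"

definition XA_Porb :: "nat \<Rightarrow> (nat \<Rightarrow> nat \<Rightarrow> nat) \<Rightarrow> (nat \<Rightarrow> nat) set set" where
  "XA_Porb N A = {\<gamma>. \<exists>x\<in>XA N A. (\<exists>p\<ge>1. (shift ^^ p) x = x) \<and>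
      \<gamma> = {(shift ^^ i) x | i. i < least_period x}}"

definition beta :: "(nat \<Rightarrow> nat) set \<Rightarrow> ((nat \<Rightarrow> nat) \<Rightarrow> real) \<Rightarrow> real" where
  "beta \<gamma> c = (let x = (SOME x. x \<in> \<gamma>) in \<Sum>i<least_period x. c ((shift ^^ i) x))"

end

theory Submission
  imports Defs
begin

text \<open>
  A class \<open>[x, r]\<close> is fixed by the flow at time \<open>T > 0\<close> exactly when the chains of
  identifications starting at \<open>(x, r + T)\<close> and at \<open>(x, r)\<close> meet. The step relation is
  deterministic and lowers the height by \<open>c\<close>, whose Birkhoff sums over periods are positive
  because \<open>[c]\<close> is an order unit; hence the upper chain is the longer one and its last steps
  form a loop over a periodic sequence \<open>y\<close>, and \<open>T\<close> is a multiple of the Birkhoff sum of \<open>c\<close>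
  over the least period of \<open>y\<close>. Conversely every periodic \<open>y\<close> carries such a loop at a
  sufficiently large height. So a periodic flow orbit determines the shift orbit of the
  periodic sequences it meets, this assignment is bijective, and the least flow period is
  \<open>\<beta>\<^sub>\<gamma>(c)\<close>.
\<close>

lemma rtrancl_symcl_single_valued:
  assumes "single_valued r"
  shows "(r \<union> r\<inverse>)\<^sup>* = r\<^sup>* O (r\<^sup>*)\<inverse>"
proof
  show "(r \<union> r\<inverse>)\<^sup>* \<subseteq> r\<^sup>* O (r\<^sup>*)\<inverse>"
  proof clarify
    fix p q assume "(p, q) \<in> (r \<union> r\<inverse>)\<^sup>*"
    then show "(p, q) \<in> r\<^sup>* O (r\<^sup>*)\<inverse>"
    proof (induction rule: rtrancl_induct)
      case (step y w)
      then obtain z where pz: "(p, z) \<in> r\<^sup>*" and yz: "(y, z) \<in> r\<^sup>*" by blast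
      from step.hyps(2) show ?case
      proof
        assume "(y, w) \<in> r"
        then have "(z, w) \<in> r\<^sup>* \<or> (w, z) \<in> r\<^sup>*"
          using single_valued_confluent[OF assms yz] by blast
        then show ?thesis using pz by (blast intro: rtrancl_trans)
      next
        assume "(y, w) \<in> r\<inverse>"
        then have "(w, z) \<in> r\<^sup>*" using yz by (simp add: converse_rtrancl_into_rtrancl)
        then show ?thesis using pz by blast
      qed
    qed blast
  qed
  have "r\<^sup>* \<subseteq> (r \<union> r\<inverse>)\<^sup>*" "(r\<^sup>*)\<inverse> \<subseteq> (r \<union> r\<inverse>)\<^sup>*"
    by (auto simp: rtrancl_converse[symmetric] converse_Un Un_commute intro: rtrancl_mono[THEN subsetD])
  then show "r\<^sup>* O (r\<^sup>*)\<inverse> \<subseteq> (r \<union> r\<inverse>)\<^sup>*"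
    by (blast intro: rtrancl_trans)
qed

lemma funpow_commute_apply: "(f ^^ m) ((f ^^ n) x) = (f ^^ n) ((f ^^ m) x)"
  by (metis add.commute comp_apply funpow_add)

lemma funpow_periodic_mult:
  assumes "(f ^^ d) x = x"
  shows "(f ^^ (j * d)) x = x"
  using funpow_mod_eq[OF assms, of "j * d"] by simp

lemma funpow_periodic_image:
  assumes "(f ^^ q) y = y"
  shows "(f ^^ q) ((f ^^ m) y) = (f ^^ m) y"
  by (metis assms funpow_commute_apply)

lemma periodic_in_orbit_of_iterate:
  assumes "(f ^^ d) x = x" "d \<ge> 1"
  shows "(f ^^ (a * d - a)) ((f ^^ a) x) = x"
proof -
  have "a * d - a + a = a * d" using assms(2) by simp
  then show ?thesis using funpow_periodic_mult[OF assms(1), of a] by (metis funpow_add comp_apply)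
qed

lemma periodic_of_iterate_periodic:
  assumes "(f ^^ d) x = x" "d \<ge> 1" "(f ^^ q) ((f ^^ a) x) = (f ^^ a) x"
  shows "(f ^^ q) x = x"
  using funpow_periodic_image[OF assms(3), of "a * d - a"]
  by (simp add: periodic_in_orbit_of_iterate[OF assms(1,2)])

definition birkhoff_sum :: "('a \<Rightarrow> 'a) \<Rightarrow> ('a \<Rightarrow> real) \<Rightarrow> 'a \<Rightarrow> nat \<Rightarrow> real" where
  "birkhoff_sum f c x n = (\<Sum>i<n. c ((f ^^ i) x))"

lemma birkhoff_sum_0 [simp]: "birkhoff_sum f c x 0 = 0"
  by (simp add: birkhoff_sum_def)

lemma birkhoff_sum_Suc: "birkhoff_sum f c x (Suc n) = birkhoff_sum f c x n + c ((f ^^ n) x)"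
  by (simp add: birkhoff_sum_def)

lemma birkhoff_sum_add:
  "birkhoff_sum f c x (m + n) = birkhoff_sum f c x m + birkhoff_sum f c ((f ^^ m) x) n"
  by (induction n) (simp_all add: birkhoff_sum_Suc funpow_add funpow_commute_apply)

lemma birkhoff_sum_period_mult:
  assumes "(f ^^ d) x = x"
  shows "birkhoff_sum f c x (j * d) = real j * birkhoff_sum f c x d"
proof (induction j)
  case (Suc j)
  have "birkhoff_sum f c x (Suc j * d) = birkhoff_sum f c x (d + j * d)"
    by (simp add: add.commute)
  then show ?case using Suc assms by (simp add: birkhoff_sum_add algebra_simps)
qed simp

lemma birkhoff_sum_period_iterate:
  assumes "(f ^^ d) x = x"
  shows "birkhoff_sum f c ((f ^^ a) x) d = birkhoff_sum f c x d"
  using birkhoff_sum_add[of f c x a d] birkhoff_sum_add[of f c x d a] assms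
  by (simp add: add.commute)

lemma least_period_props:
  assumes "(shift ^^ d) x = x" "d \<ge> 1"
  shows "least_period x \<ge> 1" "(shift ^^ least_period x) x = x" "least_period x \<le> d"
proof -
  show "least_period x \<ge> 1" "(shift ^^ least_period x) x = x"
    unfolding least_period_def using LeastI[of _ d] assms by (metis (mono_tags, lifting))+
  show "least_period x \<le> d" unfolding least_period_def by (rule Least_le) (use assms in auto)
qed

lemma least_period_dvd:
  assumes "(shift ^^ d) x = x" "d \<ge> 1" "(shift ^^ q) x = x"
  shows "least_period x dvd q"
proof (rule ccontr)
  let ?p = "least_period x"
  assume "\<not> ?p dvd q"
  then have "q mod ?p \<ge> 1" by (simp add: dvd_eq_mod_eq_0)
  moreover have "(shift ^^ (q mod ?p)) x = x"
    using funpow_mod_eq[OF least_period_props(2)[OF assms(1,2)]] assms(3) by simp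
  ultimately have "?p \<le> q mod ?p"
    unfolding least_period_def by (intro Least_le) simp
  moreover have "q mod ?p < ?p" using least_period_props(1)[OF assms(1,2)] by simp
  ultimately show False by simp
qed

lemma least_period_iterate:
  assumes "(shift ^^ d) x = x" "d \<ge> 1"
  shows "least_period ((shift ^^ a) x) = least_period x"
proof -
  have "(shift ^^ p) ((shift ^^ a) x) = (shift ^^ a) x \<longleftrightarrow> (shift ^^ p) x = x" for p
    using periodic_of_iterate_periodic[OF assms] funpow_periodic_image by metis
  then show ?thesis unfolding least_period_def by simp
qed

lemma orbit_least_period:
  assumes "(shift ^^ d) x = x" "d \<ge> 1"
  shows "range (\<lambda>i. (shift ^^ i) x) = {(shift ^^ i) x | i. i < least_period x}"
proof -
  have "(shift ^^ i) x = (shift ^^ (i mod least_period x)) x" for i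
    using funpow_mod_eq[OF least_period_props(2)[OF assms]] by simp
  moreover have "i mod least_period x < least_period x" for i
    using least_period_props(1)[OF assms] by simp
  ultimately show ?thesis by blast
qed

lemma XA_shift: "x \<in> XA N A \<Longrightarrow> shift x \<in> XA N A"
  by (simp add: XA_def shift_def)

lemma XA_funpow_shift: "x \<in> XA N A \<Longrightarrow> (shift ^^ i) x \<in> XA N A"
  by (induction i) (auto simp: XA_shift)

lemma order_unit_birkhoff_sum_pos:
  assumes c: "order_unit N A c" and x: "x \<in> XA N A"
    and d: "d \<ge> 1" "(shift ^^ d) x = x"
  shows "birkhoff_sum shift c x d > 0"
proof -
  have "(\<lambda>_. 1) \<in> CZ N A" unfolding CZ_def by auto
  then obtain n :: nat where "in_Hplus N A (\<lambda>y. real n * c y - 1)"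
    using c unfolding order_unit_def by fastforce
  then obtain f h where f: "\<forall>y\<in>XA N A. f y \<ge> 0"
    and h: "\<forall>y\<in>XA N A. (real n * c y - 1) - f y = h y - h (shift y)"
    unfolding in_Hplus_def coboundary_def by auto
  let ?y = "\<lambda>i. (shift ^^ i) x"
  have "(\<Sum>i<d. (real n * c (?y i) - 1) - f (?y i)) = (\<Sum>i<d. h (?y i) - h (?y (Suc i)))"
    using h XA_funpow_shift[OF x] by (intro sum.cong) auto
  also have "\<dots> = h (?y 0) - h (?y d)"
    by (rule sum_lessThan_telescope')
  also have "\<dots> = 0"
    using d(2) by simp
  finally have "real n * birkhoff_sum shift c x d = d + (\<Sum>i<d. f (?y i))"
    by (simp add: birkhoff_sum_def sum_subtractf sum_distrib_left)
  moreover have "(\<Sum>i<d. f (?y i)) \<ge> 0"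
    using f XA_funpow_shift[OF x] by (intro sum_nonneg) auto
  ultimately have "real n * birkhoff_sum shift c x d > 0" using d(1) by linarith
  then show ?thesis by (simp add: zero_less_mult_iff)
qed

lemma orbit_in_XA_Porb:
  assumes "x \<in> XA N A" "(shift ^^ d) x = x" "d \<ge> 1"
  shows "range (\<lambda>i. (shift ^^ i) x) \<in> XA_Porb N A"
  unfolding XA_Porb_def orbit_least_period[OF assms(2,3)] using assms by blast

lemma beta_orbit:
  assumes "(shift ^^ d) x = x" "d \<ge> 1"
  shows "beta (range (\<lambda>i. (shift ^^ i) x)) c = birkhoff_sum shift c x (least_period x)"
proof -
  define y where "y = (SOME y. y \<in> range (\<lambda>i. (shift ^^ i) x))"
  then obtain a where a: "y = (shift ^^ a) x"
    by (metis (mono_tags, lifting) rangeI someI_ex imageE)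
  have "beta (range (\<lambda>i. (shift ^^ i) x)) c = birkhoff_sum shift c y (least_period y)"
    unfolding beta_def y_def[symmetric] Let_def birkhoff_sum_def ..
  also have "\<dots> = birkhoff_sum shift c x (least_period x)"
    using a least_period_iterate[OF assms] birkhoff_sum_period_iterate[OF least_period_props(2)[OF assms]]
    by simp
  finally show ?thesis .
qed

locale suspension =
  fixes N :: nat and A :: "nat \<Rightarrow> nat \<Rightarrow> nat" and l k b :: "(nat \<Rightarrow> nat) \<Rightarrow> real"
  assumes triplet: "suspension_triplet N A l k b"
begin

abbreviation "D \<equiv> susp_dom N A b"
abbreviation "S \<equiv> susp_step N A l k b"
abbreviation "E \<equiv> susp_eq N A l k b"
abbreviation "flow \<equiv> susp_flow N A l k b"
abbreviation "c \<equiv> \<lambda>x. l x - k x"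
abbreviation "csum \<equiv> birkhoff_sum shift c"

lemma b_shift_le_k: "x \<in> XA N A \<Longrightarrow> b (shift x) \<le> k x"
  using triplet unfolding suspension_triplet_def by auto

lemma csum_period_pos: "x \<in> XA N A \<Longrightarrow> d \<ge> 1 \<Longrightarrow> (shift ^^ d) x = x \<Longrightarrow> csum x d > 0"
  using order_unit_birkhoff_sum_pos triplet unfolding suspension_triplet_def by blast

lemma step_iff:
  "((x, r), q) \<in> S \<longleftrightarrow> x \<in> XA N A \<and> b x \<le> r \<and> l x \<le> r \<and> q = (shift x, r - c x)"
  unfolding susp_step_def susp_dom_def by auto

lemma step_dom: "S \<subseteq> D \<times> D"
  unfolding susp_step_def susp_dom_def using b_shift_le_k XA_shift by fastforce

lemma single_valued_step: "single_valued S"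
  unfolding single_valued_def by (auto simp: step_iff)

lemma relpow_step_dom: "(p, q) \<in> S ^^ n \<Longrightarrow> p \<in> D \<Longrightarrow> q \<in> D"
  by (induction n arbitrary: q) (use step_dom in auto)

lemma relpow_step_iff:
  assumes x: "x \<in> XA N A" "b x \<le> r"
  shows "((x, r), q) \<in> S ^^ n \<longleftrightarrow>
    (\<forall>i<n. l ((shift ^^ i) x) \<le> r - csum x i) \<and> q = ((shift ^^ n) x, r - csum x n)"
proof (induction n arbitrary: q)
  case (Suc n)
  let ?y = "(shift ^^ n) x"
  have b_le: "b ?y \<le> r - csum x n" if "\<forall>i<n. l ((shift ^^ i) x) \<le> r - csum x i"
  proof (cases n)
    case (Suc m)
    have "b ?y \<le> k ((shift ^^ m) x)"
      using Suc b_shift_le_k[OF XA_funpow_shift[OF x(1)]] by simp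
    moreover have "l ((shift ^^ m) x) \<le> r - csum x m"
      using that Suc by simp
    ultimately show ?thesis using Suc by (simp add: birkhoff_sum_Suc)
  qed (use x in simp)
  have "((x, r), q) \<in> S ^^ Suc n \<longleftrightarrow> (\<exists>w. ((x, r), w) \<in> S ^^ n \<and> (w, q) \<in> S)"
    by auto
  also have "\<dots> \<longleftrightarrow> (\<forall>i<n. l ((shift ^^ i) x) \<le> r - csum x i) \<and> ((?y, r - csum x n), q) \<in> S"
    using Suc.IH by auto
  also have "\<dots> \<longleftrightarrow> (\<forall>i<Suc n. l ((shift ^^ i) x) \<le> r - csum x i)
      \<and> q = ((shift ^^ Suc n) x, r - csum x (Suc n))"
    using b_le XA_funpow_shift[OF x(1), of n]
    by (auto simp: step_iff birkhoff_sum_Suc less_Suc_eq algebra_simps)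
  finally show ?case .
qed auto

lemma susp_eq_conversion: "E = (S \<union> S\<inverse>)\<^sup>* \<inter> D \<times> D"
proof -
  have "(S \<union> S\<inverse>)\<^sup>+ \<subseteq> D \<times> D"
    using step_dom by (intro trancl_subset_Sigma) auto
  then show ?thesis
    unfolding susp_eq_def by (auto simp: rtrancl_eq_or_trancl)
qed

lemma equiv_susp_eq: "equiv D E"
proof (rule equivI)
  have "sym ((S \<union> S\<inverse>)\<^sup>*)" by (intro sym_rtrancl sym_Un_converse)
  then show "sym E" unfolding susp_eq_conversion sym_def by blast
  show "trans E" unfolding susp_eq_conversion trans_def by (blast intro: rtrancl_trans)
qed (auto simp: susp_eq_conversion refl_on_def)

lemma susp_eq_iff_join:
  "(p, q) \<in> E \<longleftrightarrow> p \<in> D \<and> q \<in> D \<and> (\<exists>m n z. (p, z) \<in> S ^^ m \<and> (q, z) \<in> S ^^ n)"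
proof -
  have "(p, q) \<in> S\<^sup>* O (S\<^sup>*)\<inverse> \<longleftrightarrow> (\<exists>z. (p, z) \<in> S\<^sup>* \<and> (q, z) \<in> S\<^sup>*)"
    by blast
  then show ?thesis
    unfolding susp_eq_conversion rtrancl_symcl_single_valued[OF single_valued_step] rtrancl_power
    by blast
qed

lemma relpow_step_susp_eq:
  assumes "(p, q) \<in> S ^^ n" "p \<in> D"
  shows "(p, q) \<in> E"
  unfolding susp_eq_iff_join using assms relpow_step_dom[OF assms] relpow_0_I[of q S] by blast

lemma susp_class_eq_iff: "p \<in> D \<Longrightarrow> q \<in> D \<Longrightarrow> E `` {p} = E `` {q} \<longleftrightarrow> (p, q) \<in> E"
  using equiv_class_eq_iff[OF equiv_susp_eq] by blast

lemma relpow_step_raise: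
  assumes "x \<in> XA N A" "b x \<le> r" "((x, r), (y, s)) \<in> S ^^ n" "t \<ge> 0"
  shows "((x, r + t), (y, s + t)) \<in> S ^^ n"
  using assms relpow_step_iff[OF assms(1,2)] relpow_step_iff[OF assms(1), of "r + t"] by force

lemma susp_eq_raise:
  assumes "((x, r), (y, s)) \<in> E" "t \<ge> 0"
  shows "((x, r + t), (y, s + t)) \<in> E"
proof -
  obtain m n z1 z2 where z: "((x, r), (z1, z2)) \<in> S ^^ m" "((y, s), (z1, z2)) \<in> S ^^ n"
    and dom: "x \<in> XA N A" "b x \<le> r" "y \<in> XA N A" "b y \<le> s"
    using assms(1) unfolding susp_eq_iff_join susp_dom_def by auto
  have "((x, r + t), (z1, z2 + t)) \<in> S ^^ m" "((y, s + t), (z1, z2 + t)) \<in> S ^^ n"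
    using relpow_step_raise dom z assms(2) by blast+
  moreover have "(x, r + t) \<in> D" "(y, s + t) \<in> D"
    using dom assms(2) by (auto simp: susp_dom_def)
  ultimately show ?thesis unfolding susp_eq_iff_join by blast
qed

lemma flow_class:
  assumes "(x, r) \<in> D" "t \<ge> 0"
  shows "flow t (E `` {(x, r)}) = E `` {(x, r + t)}"
proof -
  let ?M = "{(y, s + t) | y s. (y, s) \<in> E `` {(x, r)}}"
  have "?M \<subseteq> E `` {(x, r + t)}"
    using susp_eq_raise assms(2) by auto
  moreover have "(x, r + t) \<in> ?M"
    using assms equiv_susp_eq unfolding equiv_def refl_on_def by blast
  ultimately have "E `` ?M = E `` {(x, r + t)}"
    using equiv_susp_eq unfolding equiv_def trans_def by blast
  then show ?thesis unfolding susp_flow_def by simp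
qed

text \<open>\<open>(x, r + csum x d)\<close> is carried back to \<open>(x, r)\<close> by \<open>d\<close> identifications, so the flow
  fixes \<open>[x, r]\<close> at time \<open>csum x d\<close>; every periodic flow orbit passes through such a point.\<close>
definition loop_at :: "(nat \<Rightarrow> nat) \<Rightarrow> real \<Rightarrow> nat \<Rightarrow> bool" where
  "loop_at x r d \<longleftrightarrow> x \<in> XA N A \<and> b x \<le> r \<and> d \<ge> 1 \<and> (shift ^^ d) x = x \<and>
     ((x, r + csum x d), (x, r)) \<in> S ^^ d"

lemma loop_at_dom: "loop_at x r d \<Longrightarrow> (x, r) \<in> D"
  unfolding loop_at_def susp_dom_def by auto

lemma loop_at_csum_pos: "loop_at x r d \<Longrightarrow> csum x d > 0"
  unfolding loop_at_def using csum_period_pos by blast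

lemma loop_at_raise:
  assumes loop: "loop_at x r d" and t: "t \<ge> 0"
  shows "loop_at x (r + t) d"
proof -
  have x: "x \<in> XA N A" "b x \<le> r + csum x d"
    and path: "((x, r + csum x d), (x, r)) \<in> S ^^ d"
    using loop loop_at_csum_pos[OF loop] unfolding loop_at_def by auto
  have "((x, r + csum x d + t), (x, r + t)) \<in> S ^^ d"
    using relpow_step_raise[OF x path t] .
  then show ?thesis using loop t unfolding loop_at_def by (simp add: algebra_simps)
qed

lemma loop_at_relpow_mult:
  assumes loop: "loop_at x r d"
  shows "((x, r + real j * csum x d), (x, r)) \<in> S ^^ (j * d)"
proof (induction j)
  case (Suc j)
  let ?T = "csum x d"
  have "loop_at x (r + real j * ?T) d"
    using loop_at_raise[OF loop] loop_at_csum_pos[OF loop] by simp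
  then have "((x, r + real j * ?T + ?T), (x, r + real j * ?T)) \<in> S ^^ d"
    unfolding loop_at_def by simp
  with Suc.IH have "((x, r + real (Suc j) * ?T), (x, r)) \<in> S ^^ d O S ^^ (j * d)"
    by (auto simp: algebra_simps)
  then show ?case by (simp add: relpow_add)
qed simp

lemma loop_at_class_raise:
  assumes loop: "loop_at x r d"
  shows "E `` {(x, r + real j * csum x d)} = E `` {(x, r)}"
proof -
  have "(x, r + real j * csum x d) \<in> D"
    using loop_at_dom[OF loop_at_raise[OF loop]] loop_at_csum_pos[OF loop] by simp
  then show ?thesis
    using susp_class_eq_iff loop_at_dom[OF loop] relpow_step_susp_eq[OF loop_at_relpow_mult[OF loop]]
    by blast
qed

lemma loop_at_flow_period:
  assumes loop: "loop_at x r d"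
  shows "flow (csum x d) (E `` {(x, r)}) = E `` {(x, r)}"
  using flow_class[OF loop_at_dom[OF loop]] loop_at_csum_pos[OF loop] loop_at_class_raise[OF loop, of 1]
  by simp

lemma loop_at_least_period:
  assumes loop: "loop_at x r d"
  shows "loop_at x (r + csum x d) (least_period x)"
proof -
  let ?T = "csum x d" and ?p = "least_period x"
  have x: "x \<in> XA N A" "b x \<le> r" "d \<ge> 1" "(shift ^^ d) x = x"
    and path: "((x, r + ?T), (x, r)) \<in> S ^^ d"
    using loop unfolding loop_at_def by auto
  have T: "?T > 0" using loop_at_csum_pos[OF loop] .
  have p: "?p \<ge> 1" "(shift ^^ ?p) x = x" "?p \<le> d"
    using least_period_props[OF x(4,3)] by auto
  have B: "csum x ?p > 0" using csum_period_pos x(1) p(1,2) by blast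
  have below: "\<forall>i<d. l ((shift ^^ i) x) \<le> r + ?T - csum x i"
    using path relpow_step_iff[of x "r + ?T"] x(1,2) T by auto
  have "\<forall>i<?p. l ((shift ^^ i) x) \<le> r + ?T + csum x ?p - csum x i"
  proof (intro allI impI)
    fix i assume "i < ?p"
    then have "l ((shift ^^ i) x) \<le> r + ?T - csum x i" using below p(3) by simp
    then show "l ((shift ^^ i) x) \<le> r + ?T + csum x ?p - csum x i" using B by linarith
  qed
  then have "((x, r + ?T + csum x ?p), (x, r + ?T)) \<in> S ^^ ?p"
    using relpow_step_iff[of x "r + ?T + csum x ?p"] x(1,2) T B p(2) by simp
  then show ?thesis unfolding loop_at_def using x T p by simp
qed

lemma loop_at_flow_least_period:
  assumes loop: "loop_at x r d"
  shows "flow (csum x (least_period x)) (E `` {(x, r)}) = E `` {(x, r)}"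
proof -
  have "E `` {(x, r + csum x d)} = E `` {(x, r)}"
    using loop_at_class_raise[OF loop, of 1] by simp
  then show ?thesis
    using loop_at_flow_period[OF loop_at_least_period[OF loop]] by simp
qed

lemma return_to_loop:
  assumes x: "x \<in> XA N A" "b x \<le> r" and T: "T > 0" and ret: "((x, r + T), (x, r)) \<in> E"
  obtains n d where "loop_at ((shift ^^ n) x) (r - csum x n) d" "T = csum ((shift ^^ n) x) d"
    "((x, r), ((shift ^^ n) x, r - csum x n)) \<in> S ^^ n"
proof -
  obtain m n z where up: "((x, r + T), z) \<in> S ^^ m" and low: "((x, r), z) \<in> S ^^ n"
    using ret unfolding susp_eq_iff_join by blast
  have xT: "b x \<le> r + T" using x T by simp
  have zm: "z = ((shift ^^ m) x, r + T - csum x m)" and zn: "z = ((shift ^^ n) x, r - csum x n)"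
    using relpow_step_iff[OF x(1) xT] relpow_step_iff[OF x] up low by auto
  have "n < m"
  proof (rule ccontr)
    assume "\<not> n < m"
    then obtain e where e: "n = m + e" using le_Suc_ex not_less by blast
    have "(shift ^^ e) ((shift ^^ m) x) = (shift ^^ m) x"
      using zm zn e by (simp add: funpow_add funpow_commute_apply)
    then have "csum ((shift ^^ m) x) e \<ge> 0"
      using csum_period_pos[OF XA_funpow_shift[OF x(1)]] by (cases "e = 0") (auto intro: less_imp_le)
    moreover have "csum x n = csum x m + csum ((shift ^^ m) x) e"
      using e birkhoff_sum_add by simp
    ultimately show False using zm zn T by simp
  qed
  define d where "d = m - n"
  with \<open>n < m\<close> have d: "m = n + d" "d \<ge> 1" by simp_all
  obtain w where w1: "((x, r + T), w) \<in> S ^^ n" and w2: "(w, z) \<in> S ^^ d"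
    using up unfolding d(1) relpow_add by blast
  let ?y = "(shift ^^ n) x" and ?s = "r - csum x n"
  have w: "w = (?y, ?s + T)" using relpow_step_iff[OF x(1) xT] w1 by auto
  have "(shift ^^ d) ?y = ?y" using zm zn d by (simp add: funpow_add funpow_commute_apply add.commute)
  moreover have "T = csum ?y d" using zm zn d birkhoff_sum_add[of shift c x n d] by simp
  moreover have "?y \<in> XA N A" "b ?y \<le> ?s"
    using relpow_step_dom[OF low] x zn by (auto simp: susp_dom_def)
  ultimately have "loop_at ?y ?s d" "T = csum ?y d"
    using w2 w zn d(2) unfolding loop_at_def by auto
  then show ?thesis using that low zn by blast
qed

lemma loop_at_period_ge:
  assumes loop: "loop_at x r d" and T: "T > 0"
    and fixed: "flow T (E `` {(x, r)}) = E `` {(x, r)}"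
  shows "csum x (least_period x) \<le> T"
proof -
  have x: "x \<in> XA N A" "b x \<le> r" "d \<ge> 1" "(shift ^^ d) x = x"
    using loop unfolding loop_at_def by auto
  have "(x, r + T) \<in> D" using x T by (simp add: susp_dom_def)
  then have "((x, r + T), (x, r)) \<in> E"
    using fixed flow_class[OF loop_at_dom[OF loop]] T susp_class_eq_iff loop_at_dom[OF loop] by simp
  then obtain n d' where loop': "loop_at ((shift ^^ n) x) (r - csum x n) d'"
    and Tc: "T = csum ((shift ^^ n) x) d'"
    using return_to_loop[OF x(1,2) T] by blast
  then have d': "d' \<ge> 1" "(shift ^^ d') ((shift ^^ n) x) = (shift ^^ n) x"
    unfolding loop_at_def by auto
  have per: "(shift ^^ d') x = x" using periodic_of_iterate_periodic[OF x(4,3) d'(2)] .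
  obtain j where j: "d' = j * least_period x"
    using least_period_dvd[OF x(4,3) per] by (metis dvd_def mult.commute)
  then have "j \<ge> 1" using d'(1) by (cases j) auto
  moreover have "T = real j * csum x (least_period x)"
    using Tc birkhoff_sum_period_iterate[OF per] birkhoff_sum_period_mult[OF least_period_props(2)[OF x(4,3)]] j
    by simp
  moreover have "csum x (least_period x) > 0"
    using csum_period_pos[OF x(1)] least_period_props[OF x(4,3)] by blast
  ultimately show ?thesis by (simp add: mult_le_cancel_right1)
qed

definition flow_orbit :: "((nat \<Rightarrow> nat) \<times> real) set \<Rightarrow> ((nat \<Rightarrow> nat) \<times> real) set set" where
  "flow_orbit u = {flow t u | t. t \<ge> 0}"

definition periodic_base :: "((nat \<Rightarrow> nat) \<times> real) set set \<Rightarrow> (nat \<Rightarrow> nat) set" where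
  "periodic_base \<tau> = {x. (\<exists>q\<ge>1. (shift ^^ q) x = x) \<and> (\<exists>u\<in>\<tau>. \<exists>r. (x, r) \<in> u)}"

lemma class_in_flow_orbit: "p \<in> D \<Longrightarrow> E `` {p} \<in> flow_orbit (E `` {p})"
  unfolding flow_orbit_def using flow_class[of "fst p" "snd p" 0] by force

lemma flow_Porb_loop_at:
  assumes "\<tau> \<in> flow_Porb N A l k b"
  obtains x r d where "loop_at x r d" "\<tau> = flow_orbit (E `` {(x, r)})"
proof -
  obtain u T where u: "u \<in> susp_space N A l k b" "T > 0" "flow T u = u" "\<tau> = flow_orbit u"
    using assms unfolding flow_Porb_def flow_orbit_def by blast
  then obtain y s where ys: "(y, s) \<in> D" "u = E `` {(y, s)}"
    unfolding susp_space_def by (auto elim: quotientE)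
  then have y: "y \<in> XA N A" "b y \<le> s" by (auto simp: susp_dom_def)
  have "(y, s + T) \<in> D" using y u(2) by (simp add: susp_dom_def)
  then have "((y, s + T), (y, s)) \<in> E"
    using u(2,3) ys flow_class[OF ys(1)] susp_class_eq_iff by simp
  then obtain n d where loop: "loop_at ((shift ^^ n) y) (s - csum y n) d"
    and path: "((y, s), ((shift ^^ n) y, s - csum y n)) \<in> S ^^ n"
    using return_to_loop[OF y u(2)] by blast
  have "u = E `` {((shift ^^ n) y, s - csum y n)}"
    using ys susp_class_eq_iff relpow_step_susp_eq[OF path ys(1)] loop_at_dom[OF loop] by simp
  then show ?thesis using that loop u(4) by blast
qed

lemma loop_at_flow_Porb:
  assumes loop: "loop_at x r d"
  shows "flow_orbit (E `` {(x, r)}) \<in> flow_Porb N A l k b"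
proof -
  have "E `` {(x, r)} \<in> susp_space N A l k b"
    unfolding susp_space_def using loop_at_dom[OF loop] by (rule quotientI)
  then show ?thesis
    unfolding flow_Porb_def flow_orbit_def
    using loop_at_csum_pos[OF loop] loop_at_flow_period[OF loop] by blast
qed

lemma loop_at_iterate_equiv:
  assumes loop: "loop_at x r d"
  obtains R where "((x, r), ((shift ^^ a) x, R)) \<in> E"
proof -
  let ?T = "csum x d"
  have x: "x \<in> XA N A" "b x \<le> r" "d \<ge> 1"
    using loop unfolding loop_at_def by auto
  have aT: "real a * ?T \<ge> 0" using loop_at_csum_pos[OF loop] by simp
  have "((x, r + real a * ?T), (x, r)) \<in> S ^^ (a + (a * d - a))"
    using loop_at_relpow_mult[OF loop, of a] x(3) by simp
  then obtain w where w1: "((x, r + real a * ?T), w) \<in> S ^^ a"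
    and w2: "(w, (x, r)) \<in> S ^^ (a * d - a)"
    unfolding relpow_add by blast
  have top: "(x, r + real a * ?T) \<in> D" "b x \<le> r + real a * ?T"
    using x aT by (auto simp: susp_dom_def)
  have "w = ((shift ^^ a) x, snd w)"
    using w1 relpow_step_iff[OF x(1) top(2)] by auto
  moreover have "(w, (x, r)) \<in> E"
    using relpow_step_susp_eq[OF w2 relpow_step_dom[OF w1 top(1)]] .
  ultimately have "((x, r), ((shift ^^ a) x, snd w)) \<in> E"
    using equiv_susp_eq unfolding equiv_def sym_def by metis
  then show ?thesis by (rule that)
qed

lemma periodic_base_loop_at:
  assumes loop: "loop_at x r d"
  shows "periodic_base (flow_orbit (E `` {(x, r)})) = range (\<lambda>i. (shift ^^ i) x)"
proof
  have x: "x \<in> XA N A" "b x \<le> r" "d \<ge> 1" "(shift ^^ d) x = x"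
    using loop unfolding loop_at_def by auto
  show "periodic_base (flow_orbit (E `` {(x, r)})) \<subseteq> range (\<lambda>i. (shift ^^ i) x)"
  proof
    fix y assume "y \<in> periodic_base (flow_orbit (E `` {(x, r)}))"
    then obtain q t s where q: "q \<ge> 1" "(shift ^^ q) y = y" and t: "t \<ge> 0"
      and ys: "(y, s) \<in> flow t (E `` {(x, r)})"
      unfolding periodic_base_def flow_orbit_def by blast
    then have "((x, r + t), (y, s)) \<in> E"
      using flow_class[OF loop_at_dom[OF loop] t] by simp
    then obtain m n z where "((x, r + t), z) \<in> S ^^ m" "((y, s), z) \<in> S ^^ n"
      and y: "y \<in> XA N A" "b y \<le> s"
      unfolding susp_eq_iff_join susp_dom_def by blast
    then have "(shift ^^ n) y = (shift ^^ m) x"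
      using relpow_step_iff[of x "r + t"] relpow_step_iff[OF y] x(1,2) t by auto
    then have "y = (shift ^^ (n * q - n + m)) x"
      using periodic_in_orbit_of_iterate[OF q(2,1), of n] by (simp add: funpow_add)
    then show "y \<in> range (\<lambda>i. (shift ^^ i) x)" by blast
  qed
  show "range (\<lambda>i. (shift ^^ i) x) \<subseteq> periodic_base (flow_orbit (E `` {(x, r)}))"
  proof clarify
    fix a
    obtain R where "((x, r), ((shift ^^ a) x, R)) \<in> E"
      using loop_at_iterate_equiv[OF loop] .
    moreover have "(shift ^^ d) ((shift ^^ a) x) = (shift ^^ a) x"
      using funpow_periodic_image[OF x(4)] .
    ultimately show "(shift ^^ a) x \<in> periodic_base (flow_orbit (E `` {(x, r)}))"
      unfolding periodic_base_def using class_in_flow_orbit[OF loop_at_dom[OF loop]] x(3) by blast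
  qed
qed

lemma flow_orbit_subset:
  assumes loop: "loop_at x r d" and loop': "loop_at y s e" and y: "y \<in> range (\<lambda>i. (shift ^^ i) x)"
  shows "flow_orbit (E `` {(y, s)}) \<subseteq> flow_orbit (E `` {(x, r)})"
proof
  obtain R where R: "((x, r), (y, R)) \<in> E"
    using y loop_at_iterate_equiv[OF loop] by blast
  then have yR: "(y, R) \<in> D" and same: "E `` {(y, R)} = E `` {(x, r)}"
    using equiv_susp_eq equiv_class_eq[OF equiv_susp_eq R] unfolding equiv_def refl_on_def by auto
  let ?T = "csum y e"
  obtain j :: nat where j: "R - s < real j * ?T"
    using reals_Archimedean3[OF loop_at_csum_pos[OF loop']] by blast
  define t0 where "t0 = s + real j * ?T - R"
  have t0: "t0 \<ge> 0" using j unfolding t0_def by simp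
  fix v assume "v \<in> flow_orbit (E `` {(y, s)})"
  then obtain t where t: "t \<ge> 0" "v = flow t (E `` {(y, s)})"
    unfolding flow_orbit_def by blast
  have "v = E `` {(y, s + t)}" using t flow_class[OF loop_at_dom[OF loop']] by simp
  also have "\<dots> = E `` {(y, s + t + real j * ?T)}"
    using loop_at_class_raise[OF loop_at_raise[OF loop' t(1)]] by simp
  also have "\<dots> = E `` {(y, R + (t0 + t))}" unfolding t0_def by (simp add: algebra_simps)
  also have "\<dots> = flow (t0 + t) (E `` {(x, r)})"
    using flow_class[OF yR] t0 t same by simp
  finally show "v \<in> flow_orbit (E `` {(x, r)})"
    unfolding flow_orbit_def using t0 t by auto
qed

lemma orbit_length_loop_at:
  assumes loop: "loop_at x r d"
  shows "orbit_length N A l k b (flow_orbit (E `` {(x, r)})) = csum x (least_period x)"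
proof -
  have x: "x \<in> XA N A" "d \<ge> 1" "(shift ^^ d) x = x"
    using loop unfolding loop_at_def by auto
  let ?u = "SOME u. u \<in> flow_orbit (E `` {(x, r)})"
  have "?u \<in> flow_orbit (E `` {(x, r)})"
    using class_in_flow_orbit[OF loop_at_dom[OF loop]] by (rule someI)
  then obtain t where t: "t \<ge> 0" "?u = E `` {(x, r + t)}"
    unfolding flow_orbit_def using flow_class[OF loop_at_dom[OF loop]] by auto
  have loop_t: "loop_at x (r + t) d" using loop_at_raise[OF loop t(1)] .
  have "csum x (least_period x) > 0"
    using csum_period_pos[OF x(1)] least_period_props[OF x(3,2)] by blast
  then have "(LEAST s. s > 0 \<and> flow s ?u = ?u) = csum x (least_period x)"
    unfolding t(2)
    by (intro Least_equality)
      (use loop_at_flow_least_period[OF loop_t] loop_at_period_ge[OF loop_t] in auto)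
  then show ?thesis unfolding orbit_length_def Let_def .
qed

lemma loop_at_exists:
  assumes x: "x \<in> XA N A" and per: "(shift ^^ q) x = x" "q \<ge> 1"
  shows "\<exists>r. loop_at x r (least_period x)"
proof -
  let ?p = "least_period x"
  have p: "?p \<ge> 1" "(shift ^^ ?p) x = x" using least_period_props[OF per] by auto
  have B: "csum x ?p > 0" using csum_period_pos[OF x p] .
  define r where "r = Max (insert (b x) ((\<lambda>i. l ((shift ^^ i) x) + csum x i) ` {..<?p}))"
  have rb: "b x \<le> r" unfolding r_def by (rule Max_ge) auto
  have ri: "l ((shift ^^ i) x) + csum x i \<le> r" if "i < ?p" for i
    unfolding r_def by (rule Max_ge) (use that in auto)
  have "b x \<le> r + csum x ?p" using rb B by simp
  moreover have "\<forall>i<?p. l ((shift ^^ i) x) \<le> r + csum x ?p - csum x i"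
    using ri B by (auto intro: add_increasing2 simp: le_diff_eq)
  ultimately have "((x, r + csum x ?p), (x, r)) \<in> S ^^ ?p"
    using relpow_step_iff[OF x] p(2) by simp
  then show ?thesis unfolding loop_at_def using x rb p by auto
qed

lemma periodic_base_in_XA_Porb:
  assumes "\<tau> \<in> flow_Porb N A l k b"
  shows "periodic_base \<tau> \<in> XA_Porb N A"
proof -
  obtain x r d where loop: "loop_at x r d" and \<tau>: "\<tau> = flow_orbit (E `` {(x, r)})"
    using flow_Porb_loop_at[OF assms] .
  then have "x \<in> XA N A" "(shift ^^ d) x = x" "d \<ge> 1" unfolding loop_at_def by auto
  then show ?thesis using orbit_in_XA_Porb periodic_base_loop_at[OF loop] \<tau> by simp
qed

lemma inj_on_periodic_base: "inj_on periodic_base (flow_Porb N A l k b)"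
proof (rule inj_onI)
  fix \<tau>1 \<tau>2
  assume "\<tau>1 \<in> flow_Porb N A l k b" "\<tau>2 \<in> flow_Porb N A l k b"
    and eq: "periodic_base \<tau>1 = periodic_base \<tau>2"
  then obtain x1 r1 d1 x2 r2 d2 where
    loop1: "loop_at x1 r1 d1" "\<tau>1 = flow_orbit (E `` {(x1, r1)})" and
    loop2: "loop_at x2 r2 d2" "\<tau>2 = flow_orbit (E `` {(x2, r2)})"
    by (metis flow_Porb_loop_at)
  have orbits: "range (\<lambda>i. (shift ^^ i) x1) = range (\<lambda>i. (shift ^^ i) x2)"
    using eq loop1 loop2 periodic_base_loop_at by metis
  have "x1 \<in> range (\<lambda>i. (shift ^^ i) x2)" "x2 \<in> range (\<lambda>i. (shift ^^ i) x1)"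
    using orbits by (metis funpow_0 rangeI)+
  then show "\<tau>1 = \<tau>2"
    using flow_orbit_subset loop1 loop2 by blast
qed

lemma XA_Porb_subset_periodic_base_image:
  "XA_Porb N A \<subseteq> periodic_base ` flow_Porb N A l k b"
proof
  fix \<gamma> assume "\<gamma> \<in> XA_Porb N A"
  then obtain x q where x: "x \<in> XA N A" "q \<ge> 1" "(shift ^^ q) x = x"
    and \<gamma>: "\<gamma> = {(shift ^^ i) x | i. i < least_period x}"
    unfolding XA_Porb_def by blast
  obtain r where "loop_at x r (least_period x)" using loop_at_exists[OF x(1,3,2)] by blast
  then have "periodic_base (flow_orbit (E `` {(x, r)})) = \<gamma>"
    "flow_orbit (E `` {(x, r)}) \<in> flow_Porb N A l k b"
    using periodic_base_loop_at orbit_least_period[OF x(3,2)] \<gamma> loop_at_flow_Porb by auto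
  then show "\<gamma> \<in> periodic_base ` flow_Porb N A l k b" by blast
qed

lemma orbit_length_eq_beta:
  assumes "\<tau> \<in> flow_Porb N A l k b"
  shows "orbit_length N A l k b \<tau> = beta (periodic_base \<tau>) c"
proof -
  obtain x r d where loop: "loop_at x r d" and \<tau>: "\<tau> = flow_orbit (E `` {(x, r)})"
    using flow_Porb_loop_at[OF assms] .
  then have "(shift ^^ d) x = x" "d \<ge> 1" unfolding loop_at_def by auto
  then show ?thesis
    using orbit_length_loop_at[OF loop] periodic_base_loop_at[OF loop] beta_orbit \<tau> by simp
qed

theorem periodic_orbit_correspondence:
  "\<exists>\<Gamma>. bij_betw \<Gamma> (flow_Porb N A l k b) (XA_Porb N A) \<and>
     (\<forall>\<tau>\<in>flow_Porb N A l k b. orbit_length N A l k b \<tau> = beta (\<Gamma> \<tau>) c)"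
proof (intro exI conjI)
  show "bij_betw periodic_base (flow_Porb N A l k b) (XA_Porb N A)"
    unfolding bij_betw_def
    using inj_on_periodic_base periodic_base_in_XA_Porb XA_Porb_subset_periodic_base_image by blast
qed (use orbit_length_eq_beta in blast)

end

theorem lemma4p1:
  fixes N :: nat and A :: "nat \<Rightarrow> nat \<Rightarrow> nat"
    and l k b :: "(nat \<Rightarrow> nat) \<Rightarrow> real"
  assumes "N > 1"
    and "zero_one_matrix N A"
    and "irreducible_matrix N A"
    and "\<not> permutation_matrix N A"
    and "suspension_triplet N A l k b"
  shows "\<exists>\<Gamma>. bij_betw \<Gamma> (flow_Porb N A l k b) (XA_Porb N A) \<and>
           (\<forall>\<tau>\<in>flow_Porb N A l k b.
              orbit_length N A l k b \<tau> = beta (\<Gamma> \<tau>) (\<lambda>x. l x - k x))"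
  using suspension.periodic_orbit_correspondence[OF suspension.intro[OF assms(5)]] .

end
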